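(* Let $F\colon\mathbf{Ring}^{\mathrm{op}}\to\mathbf{Loc}$ be any functor whose restriction to commutative rings is naturally isomorphic to the Pierce spectrum functor. Then $F(R)$ is the trivial locale for every Kochen--Specker ring $R$; in particular $F(M_n(\mathbb{C}))$ is trivial for all $n\ge 3$.
   Context: $\mathbf{Ring}$ is the category of unital rings and unital ring homomorphisms; $\mathbf{Loc}$ is the category of locales. The Pierce spectrum of a commutative ring $R$ is the Stone spectrum of its boolean algebra $E(R)$ of idempotents, i.e. the locale whose frame is the ideal frame $\mathrm{Idl}(E(R))$. A locale is trivial if its frame satisfies $0=1$. A ring $R$ is Kochen--Specker if there is a ring homomorphism $M_n(\mathbb{C})\to R$ for some $n\ge 3$, where $M_n(\mathbb{C})$ is the ring of $n\times n$ complex matrices. *)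

theory Defs
  imports "HOL-Algebra.QuotRing" "Jordan_Normal_Form.Matrix"
begin

section \<open>Frames (locales are represented by their frames of opens)\<close>

record 'b frame_str =
  fcarrier :: "'b set"
  fle :: "'b \<Rightarrow> 'b \<Rightarrow> bool"

definition is_lub :: "'b frame_str \<Rightarrow> 'b set \<Rightarrow> 'b \<Rightarrow> bool" where
  "is_lub L A x \<longleftrightarrow> x \<in> fcarrier L \<and> (\<forall>a\<in>A. fle L a x)
     \<and> (\<forall>y\<in>fcarrier L. (\<forall>a\<in>A. fle L a y) \<longrightarrow> fle L x y)"

definition is_glb :: "'b frame_str \<Rightarrow> 'b set \<Rightarrow> 'b \<Rightarrow> bool" where
  "is_glb L A x \<longleftrightarrow> x \<in> fcarrier L \<and> (\<forall>a\<in>A. fle L x a)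
     \<and> (\<forall>y\<in>fcarrier L. (\<forall>a\<in>A. fle L y a) \<longrightarrow> fle L y x)"

definition fsup :: "'b frame_str \<Rightarrow> 'b set \<Rightarrow> 'b" where
  "fsup L A = (THE x. is_lub L A x)"

definition finf :: "'b frame_str \<Rightarrow> 'b \<Rightarrow> 'b \<Rightarrow> 'b" where
  "finf L a b = (THE x. is_glb L {a, b} x)"

definition ftop :: "'b frame_str \<Rightarrow> 'b" where
  "ftop L = fsup L (fcarrier L)"

definition fbot :: "'b frame_str \<Rightarrow> 'b" where
  "fbot L = fsup L {}"

definition is_frame :: "'b frame_str \<Rightarrow> bool" where
  "is_frame L \<longleftrightarrow>
     (\<forall>x\<in>fcarrier L. fle L x x)
   \<and> (\<forall>x\<in>fcarrier L. \<forall>y\<in>fcarrier L. fle L x y \<and> fle L y x \<longrightarrow> x = y)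
   \<and> (\<forall>x\<in>fcarrier L. \<forall>y\<in>fcarrier L. \<forall>z\<in>fcarrier L. fle L x y \<and> fle L y z \<longrightarrow> fle L x z)
   \<and> (\<forall>A. A \<subseteq> fcarrier L \<longrightarrow> (\<exists>x. is_lub L A x))
   \<and> (\<forall>a\<in>fcarrier L. \<forall>b\<in>fcarrier L. \<exists>x. is_glb L {a, b} x)
   \<and> (\<forall>a\<in>fcarrier L. \<forall>A. A \<subseteq> fcarrier L \<longrightarrow>
        finf L a (fsup L A) = fsup L ((\<lambda>s. finf L a s) ` A))"

text \<open>Frame homomorphisms: preserve arbitrary joins and finite meets.  A locale map
  \<open>X \<rightarrow> Y\<close> is a frame homomorphism \<open>O(Y) \<rightarrow> O(X)\<close>.\<close>
definition frame_hom :: "'b frame_str \<Rightarrow> 'c frame_str \<Rightarrow> ('b \<Rightarrow> 'c) \<Rightarrow> bool" where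
  "frame_hom L M f \<longleftrightarrow>
     (\<forall>x\<in>fcarrier L. f x \<in> fcarrier M)
   \<and> (\<forall>A. A \<subseteq> fcarrier L \<longrightarrow> f (fsup L A) = fsup M (f ` A))
   \<and> (\<forall>a\<in>fcarrier L. \<forall>b\<in>fcarrier L. f (finf L a b) = finf M (f a) (f b))
   \<and> f (ftop L) = ftop M"

definition frame_iso :: "'b frame_str \<Rightarrow> 'c frame_str \<Rightarrow> ('b \<Rightarrow> 'c) \<Rightarrow> bool" where
  "frame_iso L M f \<longleftrightarrow> frame_hom L M f \<and> bij_betw f (fcarrier L) (fcarrier M)"

definition trivial_frame :: "'b frame_str \<Rightarrow> bool" where
  "trivial_frame L \<longleftrightarrow> fbot L = ftop L"

text \<open>Morphisms are unital ring homomorphisms, taken extensional (undefined off the carrier)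
  so that they are determined by their values on the carrier.\<close>
definition ring_mor :: "'a ring \<Rightarrow> 'a ring \<Rightarrow> ('a \<Rightarrow> 'a) \<Rightarrow> bool" where
  "ring_mor R S h \<longleftrightarrow> h \<in> Ring.ring_hom R S \<and> h \<in> extensional (carrier R)"

text \<open>A functor \<open>Ring^op \<rightarrow> Loc\<close>, i.e. a covariant functor \<open>Ring \<rightarrow> Frm\<close>:
  object part \<open>Fo\<close>, morphism part \<open>Fm R S h\<close> for \<open>h : R \<rightarrow> S\<close>.\<close>
definition ring_loc_functor ::
  "('a ring \<Rightarrow> 'b frame_str) \<Rightarrow> ('a ring \<Rightarrow> 'a ring \<Rightarrow> ('a \<Rightarrow> 'a) \<Rightarrow> 'b \<Rightarrow> 'b) \<Rightarrow> bool" where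
  "ring_loc_functor Fo Fm \<longleftrightarrow>
     (\<forall>R. ring R \<longrightarrow> is_frame (Fo R))
   \<and> (\<forall>R S h. ring R \<and> ring S \<and> ring_mor R S h \<longrightarrow> frame_hom (Fo R) (Fo S) (Fm R S h))
   \<and> (\<forall>R. ring R \<longrightarrow> (\<forall>x\<in>fcarrier (Fo R). Fm R R (restrict id (carrier R)) x = x))
   \<and> (\<forall>R S T f g. ring R \<and> ring S \<and> ring T \<and> ring_mor R S f \<and> ring_mor S T g \<longrightarrow>
        (\<forall>x\<in>fcarrier (Fo R). Fm R T (compose (carrier R) g f) x = Fm S T g (Fm R S f x)))"

definition idempotents :: "('a, 'm) ring_scheme \<Rightarrow> 'a set" where
  "idempotents R = {e \<in> carrier R. e \<otimes>\<^bsub>R\<^esub> e = e}"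

text \<open>Ideals of the boolean algebra \<open>E(R)\<close> (order \<open>f \<le> e \<longleftrightarrow> f e = f\<close>,
  join \<open>e \<or> f = e + f - e f\<close>).\<close>
definition bool_ideal :: "('a, 'm) ring_scheme \<Rightarrow> 'a set \<Rightarrow> bool" where
  "bool_ideal R I \<longleftrightarrow> I \<subseteq> idempotents R \<and> \<zero>\<^bsub>R\<^esub> \<in> I
     \<and> (\<forall>e\<in>I. \<forall>f\<in>I. e \<oplus>\<^bsub>R\<^esub> f \<oplus>\<^bsub>R\<^esub> (\<ominus>\<^bsub>R\<^esub> (e \<otimes>\<^bsub>R\<^esub> f)) \<in> I)
     \<and> (\<forall>e\<in>I. \<forall>f\<in>idempotents R. f \<otimes>\<^bsub>R\<^esub> e = f \<longrightarrow> f \<in> I)"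

definition pierce_frame :: "('a, 'm) ring_scheme \<Rightarrow> 'a set frame_str" where
  "pierce_frame R = \<lparr>fcarrier = {I. bool_ideal R I}, fle = (\<subseteq>)\<rparr>"

text \<open>Action on morphisms: \<open>h : R \<rightarrow> S\<close> induces the frame map \<open>Idl(E R) \<rightarrow> Idl(E S)\<close>
  sending an ideal to the ideal generated by its image.\<close>
definition pierce_map :: "'a ring \<Rightarrow> 'a ring \<Rightarrow> ('a \<Rightarrow> 'a) \<Rightarrow> 'a set \<Rightarrow> 'a set" where
  "pierce_map R S h I = {f \<in> idempotents S. \<exists>e\<in>I. f \<otimes>\<^bsub>S\<^esub> h e = f}"

definition restricts_to_pierce ::
  "('a ring \<Rightarrow> 'b frame_str) \<Rightarrow> ('a ring \<Rightarrow> 'a ring \<Rightarrow> ('a \<Rightarrow> 'a) \<Rightarrow> 'b \<Rightarrow> 'b) \<Rightarrow> bool" where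
  "restricts_to_pierce Fo Fm \<longleftrightarrow>
    (\<exists>\<eta> :: 'a ring \<Rightarrow> 'b \<Rightarrow> 'a set.
       (\<forall>R. cring R \<longrightarrow> frame_iso (Fo R) (pierce_frame R) (\<eta> R))
     \<and> (\<forall>R S h. cring R \<and> cring S \<and> ring_mor R S h \<longrightarrow>
          (\<forall>x\<in>fcarrier (Fo R). \<eta> S (Fm R S h x) = pierce_map R S h (\<eta> R x))))"

abbreviation cmat_ring :: "nat \<Rightarrow> complex mat ring" where
  "cmat_ring n \<equiv> ring_mat TYPE(complex) n ()"

definition kochen_specker :: "('a, 'm) ring_scheme \<Rightarrow> bool" where
  "kochen_specker R \<longleftrightarrow> (\<exists>n\<ge>3. \<exists>\<phi>. \<phi> \<in> Ring.ring_hom (cmat_ring n) R)"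

end

theory Submission
  imports Defs "HOL-Algebra.Subrings"
begin

text \<open>For a commutative subring \<open>C\<close> of \<open>R\<close>, the inclusion \<open>C \<rightarrow> R\<close> and the isomorphism
  \<open>F(C) \<cong> Idl(E(C))\<close> turn every idempotent \<open>e\<close> of \<open>C\<close> into an open of \<open>F(R)\<close>; by
  naturality this open does not depend on \<open>C\<close>, and on commuting idempotents the assignment
  preserves \<open>0\<close>, products and complements.  If \<open>F(R)\<close> were nontrivial, refining a nonzero
  open along finitely many covers \<open>[e] \<or> [1 - e] = 1\<close> would produce a nonzero open \<open>U\<close>
  deciding for each \<open>e\<close> of a finite family whether \<open>U \<le> [e]\<close> or \<open>U \<le> [1 - e]\<close>, i.e. a
  Kochen--Specker colouring of the family.  Placing a Kochen--Specker configuration of rank one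
  projections of \<open>M\<^sub>3(\<complex>)\<close> on the coordinates \<open>0, 1, k\<close> of \<open>M\<^sub>n(\<complex>)\<close> and pushing it into
  \<open>R\<close>, this shows that the diagonal projection onto the other coordinates has open \<open>1\<close>.  The
  product of these projections over \<open>k = 2, \<dots>, n - 1\<close> is \<open>0\<close>, so \<open>1 = [0] = 0\<close> in \<open>F(R)\<close>.\<close>

section \<open>Frames\<close>

lemma fsup_eqI:
  assumes "antisymp_on (fcarrier L) (fle L)" and "is_lub L A x"
  shows "fsup L A = x"
  unfolding fsup_def
  by (rule the_equality) (use assms in \<open>auto simp: is_lub_def antisymp_on_def\<close>)

lemma finf_eqI:
  assumes "antisymp_on (fcarrier L) (fle L)" and "is_glb L {a, b} x"
  shows "finf L a b = x"
  unfolding finf_def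
  by (rule the_equality) (use assms in \<open>auto simp: is_glb_def antisymp_on_def\<close>)

locale frame =
  fixes L :: "'b frame_str"
  assumes is_frame: "is_frame L"
begin

lemma fle_refl: "x \<in> fcarrier L \<Longrightarrow> fle L x x"
  using is_frame unfolding is_frame_def by (elim conjE) blast

lemma fle_antisym: "antisymp_on (fcarrier L) (fle L)"
  using is_frame unfolding is_frame_def antisymp_on_def by (elim conjE) blast

lemma fle_trans:
  "x \<in> fcarrier L \<Longrightarrow> y \<in> fcarrier L \<Longrightarrow> z \<in> fcarrier L \<Longrightarrow> fle L x y \<Longrightarrow> fle L y z \<Longrightarrow> fle L x z"
  using is_frame unfolding is_frame_def by (elim conjE) blast

lemma is_lub_fsup:
  assumes "A \<subseteq> fcarrier L" shows "is_lub L A (fsup L A)"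
proof -
  obtain x where "is_lub L A x"
    using is_frame assms unfolding is_frame_def by (elim conjE) blast
  then show ?thesis
    using fsup_eqI[OF fle_antisym] by simp
qed

lemma is_glb_finf:
  assumes "a \<in> fcarrier L" "b \<in> fcarrier L" shows "is_glb L {a, b} (finf L a b)"
proof -
  obtain x where "is_glb L {a, b} x"
    using is_frame assms unfolding is_frame_def by (elim conjE) blast
  then show ?thesis
    using finf_eqI[OF fle_antisym] by simp
qed

lemma fsup_closed: "A \<subseteq> fcarrier L \<Longrightarrow> fsup L A \<in> fcarrier L"
  using is_lub_fsup unfolding is_lub_def by blast

lemma finf_closed: "a \<in> fcarrier L \<Longrightarrow> b \<in> fcarrier L \<Longrightarrow> finf L a b \<in> fcarrier L"
  using is_glb_finf unfolding is_glb_def by blast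

lemma finf_lower1: "a \<in> fcarrier L \<Longrightarrow> b \<in> fcarrier L \<Longrightarrow> fle L (finf L a b) a"
  using is_glb_finf unfolding is_glb_def by blast

lemma finf_lower2: "a \<in> fcarrier L \<Longrightarrow> b \<in> fcarrier L \<Longrightarrow> fle L (finf L a b) b"
  using is_glb_finf unfolding is_glb_def by blast

lemma finf_greatest:
  "a \<in> fcarrier L \<Longrightarrow> b \<in> fcarrier L \<Longrightarrow> z \<in> fcarrier L \<Longrightarrow> fle L z a \<Longrightarrow> fle L z b
    \<Longrightarrow> fle L z (finf L a b)"
  using is_glb_finf[of a b] unfolding is_glb_def by blast

lemma fbot_closed: "fbot L \<in> fcarrier L"
  unfolding fbot_def by (rule fsup_closed) simp

lemma fbot_least: "x \<in> fcarrier L \<Longrightarrow> fle L (fbot L) x"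
  using is_lub_fsup[of "{}"] unfolding fbot_def is_lub_def by simp

lemma ftop_closed: "ftop L \<in> fcarrier L"
  unfolding ftop_def by (rule fsup_closed) simp

lemma ftop_greatest: "x \<in> fcarrier L \<Longrightarrow> fle L x (ftop L)"
  using is_lub_fsup[of "fcarrier L"] unfolding ftop_def is_lub_def by simp

lemma fle_fbot_eq: "x \<in> fcarrier L \<Longrightarrow> fle L x (fbot L) \<Longrightarrow> x = fbot L"
  using fle_antisym fbot_closed fbot_least unfolding antisymp_on_def by blast

lemma finf_ftop: "x \<in> fcarrier L \<Longrightarrow> finf L x (ftop L) = x"
  by (rule finf_eqI[OF fle_antisym]) (auto simp: is_glb_def fle_refl ftop_greatest)

lemma fsup_fbot: "x \<in> fcarrier L \<Longrightarrow> fsup L {x, fbot L} = x"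
  by (rule fsup_eqI[OF fle_antisym]) (auto simp: is_lub_def fle_refl fbot_least fbot_closed)

lemma finf_fsup_distrib:
  "a \<in> fcarrier L \<Longrightarrow> A \<subseteq> fcarrier L \<Longrightarrow> finf L a (fsup L A) = fsup L ((\<lambda>s. finf L a s) ` A)"
  using is_frame unfolding is_frame_def by (elim conjE) blast

lemma finf_cover_nonbot:
  assumes c: "c \<in> fcarrier L" "c \<noteq> fbot L" and xy: "x \<in> fcarrier L" "y \<in> fcarrier L"
    and cover: "fsup L {x, y} = ftop L"
  shows "finf L c x \<noteq> fbot L \<or> finf L c y \<noteq> fbot L"
proof (rule ccontr)
  assume "\<not> ?thesis"
  then have "finf L c (fsup L {x, y}) = fsup L {fbot L, fbot L}"
    using finf_fsup_distrib[of c "{x, y}"] c xy by simp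
  also have "\<dots> = fbot L"
    using fsup_fbot[OF fbot_closed] by simp
  finally show False
    using cover finf_ftop c by simp
qed

lemma nonbot_below_deciding_covers:
  assumes "\<forall>(x, y) \<in> set ps. x \<in> fcarrier L \<and> y \<in> fcarrier L \<and> fsup L {x, y} = ftop L"
    and "c \<in> fcarrier L" "c \<noteq> fbot L"
  shows "\<exists>U \<in> fcarrier L. U \<noteq> fbot L \<and> fle L U c \<and> (\<forall>(x, y) \<in> set ps. fle L U x \<or> fle L U y)"
  using assms
proof (induction ps arbitrary: c)
  case Nil
  then show ?case using fle_refl by auto
next
  case (Cons p ps)
  obtain x y where p: "p = (x, y)" by fastforce
  have xy: "x \<in> fcarrier L" "y \<in> fcarrier L" "fsup L {x, y} = ftop L"
    using Cons.prems p by auto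
  obtain z where z: "z \<in> {x, y}" "finf L c z \<noteq> fbot L"
    using finf_cover_nonbot[OF Cons.prems(2,3) xy] by blast
  have z_closed: "z \<in> fcarrier L" and cz_closed: "finf L c z \<in> fcarrier L"
    using z xy finf_closed[OF Cons.prems(2)] by auto
  obtain U where U: "U \<in> fcarrier L" "U \<noteq> fbot L" "fle L U (finf L c z)"
    "\<forall>(x, y) \<in> set ps. fle L U x \<or> fle L U y"
    using Cons.IH[OF _ cz_closed z(2)] Cons.prems(1) by auto
  have "fle L U c"
    using fle_trans[OF U(1) cz_closed Cons.prems(2) U(3) finf_lower1[OF Cons.prems(2) z_closed]] .
  moreover have "fle L U z"
    using fle_trans[OF U(1) cz_closed z_closed U(3) finf_lower2[OF Cons.prems(2) z_closed]] .
  ultimately show ?case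
    using U z p by auto
qed

end

lemma frame_hom_closed: "frame_hom L M f \<Longrightarrow> x \<in> fcarrier L \<Longrightarrow> f x \<in> fcarrier M"
  unfolding frame_hom_def by blast

lemma frame_hom_fsup: "frame_hom L M f \<Longrightarrow> A \<subseteq> fcarrier L \<Longrightarrow> f (fsup L A) = fsup M (f ` A)"
  unfolding frame_hom_def by blast

lemma frame_hom_finf:
  "frame_hom L M f \<Longrightarrow> a \<in> fcarrier L \<Longrightarrow> b \<in> fcarrier L \<Longrightarrow> f (finf L a b) = finf M (f a) (f b)"
  unfolding frame_hom_def by blast

lemma frame_hom_ftop: "frame_hom L M f \<Longrightarrow> f (ftop L) = ftop M"
  unfolding frame_hom_def by blast

lemma frame_hom_fbot: "frame_hom L M f \<Longrightarrow> f (fbot L) = fbot M"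
  unfolding fbot_def using frame_hom_fsup[of L M f "{}"] by simp

lemma frame_hom_comp:
  assumes f: "frame_hom L M f" and g: "frame_hom M N g"
  shows "frame_hom L N (g \<circ> f)"
  unfolding frame_hom_def
proof (intro conjI ballI allI impI)
  fix A assume "A \<subseteq> fcarrier L"
  moreover from this have "f ` A \<subseteq> fcarrier M"
    using frame_hom_closed[OF f] by blast
  ultimately show "(g \<circ> f) (fsup L A) = fsup N ((g \<circ> f) ` A)"
    using frame_hom_fsup[OF f] frame_hom_fsup[OF g] by (simp add: image_comp)
qed (use frame_hom_closed[OF f] frame_hom_closed[OF g] frame_hom_finf[OF f] frame_hom_finf[OF g]
       frame_hom_ftop[OF f] frame_hom_ftop[OF g] in auto)

lemma (in frame) frame_hom_inv_into:
  assumes iso: "frame_iso L M f"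
  shows "frame_hom M L (inv_into (fcarrier L) f)"
proof -
  let ?g = "inv_into (fcarrier L) f"
  have hom: "frame_hom L M f" and bij: "bij_betw f (fcarrier L) (fcarrier M)"
    using iso unfolding frame_iso_def by blast+
  have g_closed: "\<And>y. y \<in> fcarrier M \<Longrightarrow> ?g y \<in> fcarrier L"
    using bij by (meson bij_betw_apply bij_betw_inv_into)
  have f_g: "\<And>y. y \<in> fcarrier M \<Longrightarrow> f (?g y) = y"
    using bij by (meson bij_betw_inv_into_right)
  have g_f: "\<And>x. x \<in> fcarrier L \<Longrightarrow> ?g (f x) = x"
    using bij by (meson bij_betw_inv_into_left)
  show ?thesis
    unfolding frame_hom_def
  proof (intro conjI ballI allI impI)
    fix A assume A: "A \<subseteq> fcarrier M"
    then have gA: "?g ` A \<subseteq> fcarrier L"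
      using g_closed by blast
    have "f ` ?g ` A = A"
      using A f_g by (force simp: image_image)
    then have "fsup M A = f (fsup L (?g ` A))"
      using frame_hom_fsup[OF hom gA] by simp
    then show "?g (fsup M A) = fsup L (?g ` A)"
      using g_f fsup_closed[OF gA] by simp
  next
    fix a b assume "a \<in> fcarrier M" "b \<in> fcarrier M"
    then have "finf M a b = f (finf L (?g a) (?g b))"
      using frame_hom_finf[OF hom] g_closed f_g by simp
    then show "?g (finf M a b) = finf L (?g a) (?g b)"
      using g_f finf_closed g_closed \<open>a \<in> fcarrier M\<close> \<open>b \<in> fcarrier M\<close> by simp
  next
    show "?g (ftop M) = ftop L"
      using frame_hom_ftop[OF hom] g_f[OF ftop_closed] by metis
  qed (rule g_closed)
qed

section \<open>Idempotents and the Pierce frame\<close>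

definition principal_bool_ideal :: "('a, 'm) ring_scheme \<Rightarrow> 'a \<Rightarrow> 'a set" where
  "principal_bool_ideal R e = {f \<in> idempotents R. f \<otimes>\<^bsub>R\<^esub> e = f}"

definition orthogonal :: "('a, 'm) ring_scheme \<Rightarrow> 'a \<Rightarrow> 'a \<Rightarrow> bool" where
  "orthogonal R x y \<longleftrightarrow> x \<otimes>\<^bsub>R\<^esub> y = \<zero>\<^bsub>R\<^esub> \<and> y \<otimes>\<^bsub>R\<^esub> x = \<zero>\<^bsub>R\<^esub>"

definition idem_partition4 :: "('a, 'm) ring_scheme \<Rightarrow> 'a \<Rightarrow> 'a \<Rightarrow> 'a \<Rightarrow> 'a \<Rightarrow> bool" where
  "idem_partition4 R a b c d \<longleftrightarrow> {a, b, c, d} \<subseteq> idempotents R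
     \<and> orthogonal R a b \<and> orthogonal R a c \<and> orthogonal R a d
     \<and> orthogonal R b c \<and> orthogonal R b d \<and> orthogonal R c d
     \<and> a \<oplus>\<^bsub>R\<^esub> b \<oplus>\<^bsub>R\<^esub> c \<oplus>\<^bsub>R\<^esub> d = \<one>\<^bsub>R\<^esub>"

lemma ring_hom_idempotents:
  assumes "h \<in> Ring.ring_hom R S" "e \<in> idempotents R"
  shows "h e \<in> idempotents S"
  using assms unfolding idempotents_def by (auto simp: ring_hom_mult[symmetric] ring_hom_closed)

lemma ring_hom_idem_partition4:
  assumes R: "ring R" and S: "ring S" and h: "h \<in> Ring.ring_hom R S" and abcd: "idem_partition4 R a b c d"
  shows "idem_partition4 S (h a) (h b) (h c) (h d)"
proof -
  have closed: "a \<in> carrier R" "b \<in> carrier R" "c \<in> carrier R" "d \<in> carrier R"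
    using abcd unfolding idem_partition4_def idempotents_def by auto
  have "\<And>x y. x \<in> carrier R \<Longrightarrow> y \<in> carrier R \<Longrightarrow> orthogonal R x y \<Longrightarrow> orthogonal S (h x) (h y)"
    unfolding orthogonal_def using ring_hom_mult[OF h] ring_hom_zero[OF h R S] by metis
  moreover have "h a \<oplus>\<^bsub>S\<^esub> h b \<oplus>\<^bsub>S\<^esub> h c \<oplus>\<^bsub>S\<^esub> h d = \<one>\<^bsub>S\<^esub>"
    using abcd closed ring_hom_add[OF h] ring_hom_one[OF h] ring.ring_simprules(1)[OF R]
    unfolding idem_partition4_def by metis
  ultimately show ?thesis
    using abcd closed ring_hom_idempotents[OF h] unfolding idem_partition4_def by auto
qed

context ring
begin

lemma idempotentsD: "e \<in> idempotents R \<Longrightarrow> e \<in> carrier R" "e \<in> idempotents R \<Longrightarrow> e \<otimes> e = e"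
  unfolding idempotents_def by auto

lemma one_minus_idempotent: "e \<in> idempotents R \<Longrightarrow> \<one> \<ominus> e \<in> idempotents R"
  unfolding idempotents_def
  by (simp add: a_minus_def l_distr r_distr l_minus r_minus minus_add minus_minus a_assoc r_neg2 l_neg)

lemma mult_one_minus_idempotent: "e \<in> idempotents R \<Longrightarrow> e \<otimes> (\<one> \<ominus> e) = \<zero>"
  unfolding idempotents_def by (simp add: a_minus_def r_distr r_minus r_neg)

lemma add_one_minus: "e \<in> carrier R \<Longrightarrow> e \<oplus> (\<one> \<ominus> e) = \<one>"
  by (simp add: a_minus_def a_lcomm[of e] r_neg)

lemma bool_join_below:
  assumes "f \<in> carrier R" "g \<in> carrier R" "e \<in> carrier R" "f \<otimes> e = f" "g \<otimes> e = g"
  shows "(f \<oplus> g \<oplus> \<ominus> (f \<otimes> g)) \<otimes> e = f \<oplus> g \<oplus> \<ominus> (f \<otimes> g)"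
  using assms by (simp add: l_distr l_minus m_assoc)

lemma one_minus_mult_partition4:
  assumes "idem_partition4 R a b c d"
  shows "(\<one> \<ominus> a) \<otimes> (\<one> \<ominus> b) \<otimes> (\<one> \<ominus> c) \<otimes> (\<one> \<ominus> d) = \<zero>"
proof -
  have closed: "a \<in> carrier R" "b \<in> carrier R" "c \<in> carrier R" "d \<in> carrier R"
    and orth: "a \<otimes> b = \<zero>" "a \<otimes> c = \<zero>" "b \<otimes> c = \<zero>" "a \<otimes> d = \<zero>" "b \<otimes> d = \<zero>" "c \<otimes> d = \<zero>"
    and sum: "a \<oplus> b \<oplus> c \<oplus> d = \<one>"
    using assms unfolding idem_partition4_def orthogonal_def idempotents_def by auto
  have "\<And>x y. x \<in> carrier R \<Longrightarrow> y \<in> carrier R \<Longrightarrow> x \<otimes> y = \<zero> \<Longrightarrow> (\<one> \<ominus> x) \<otimes> (\<one> \<ominus> y) = \<one> \<ominus> (x \<oplus> y)"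
    by (simp add: a_minus_def l_distr r_distr l_minus r_minus minus_add a_ac)
  moreover have "(a \<oplus> b) \<otimes> c = \<zero>" "(a \<oplus> b \<oplus> c) \<otimes> d = \<zero>"
    using closed orth by (simp_all add: l_distr)
  ultimately have "(\<one> \<ominus> a) \<otimes> (\<one> \<ominus> b) \<otimes> (\<one> \<ominus> c) \<otimes> (\<one> \<ominus> d) = \<one> \<ominus> (a \<oplus> b \<oplus> c \<oplus> d)"
    using closed orth by simp
  then show ?thesis
    using sum by (simp add: a_minus_def r_neg)
qed

end

context cring
begin

lemma idempotents_mult_closed:
  assumes "e \<in> idempotents R" "f \<in> idempotents R"
  shows "e \<otimes> f \<in> idempotents R"
proof -
  have closed: "e \<in> carrier R" "f \<in> carrier R" and idem: "e \<otimes> e = e" "f \<otimes> f = f"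
    using assms by (simp_all add: idempotentsD)
  have "(e \<otimes> f) \<otimes> (e \<otimes> f) = (e \<otimes> e) \<otimes> (f \<otimes> f)"
    using closed by algebra
  then have "(e \<otimes> f) \<otimes> (e \<otimes> f) = e \<otimes> f"
    by (simp only: idem)
  then show ?thesis
    using closed unfolding idempotents_def by simp
qed

lemma idempotents_bool_join_closed:
  assumes "e \<in> idempotents R" "f \<in> idempotents R"
  shows "e \<oplus> f \<oplus> \<ominus> (e \<otimes> f) \<in> idempotents R"
proof -
  have "e \<in> carrier R" "f \<in> carrier R" "e \<otimes> e = e" "f \<otimes> f = f"
    using assms by (simp_all add: idempotentsD)
  then have "(e \<oplus> f \<oplus> \<ominus> (e \<otimes> f)) \<otimes> (e \<oplus> f \<oplus> \<ominus> (e \<otimes> f)) = e \<oplus> f \<oplus> \<ominus> (e \<otimes> f)"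
    by algebra (simp add: m_assoc[symmetric])
  then show ?thesis
    using assms unfolding idempotents_def by simp
qed

lemma bool_ideal_principal:
  assumes e: "e \<in> idempotents R"
  shows "bool_ideal R (principal_bool_ideal R e)"
  unfolding bool_ideal_def
proof (intro conjI ballI impI)
  show "principal_bool_ideal R e \<subseteq> idempotents R" "\<zero> \<in> principal_bool_ideal R e"
    using e unfolding principal_bool_ideal_def idempotents_def by auto
next
  fix f g assume "f \<in> principal_bool_ideal R e" "g \<in> principal_bool_ideal R e"
  then show "f \<oplus> g \<oplus> \<ominus> (f \<otimes> g) \<in> principal_bool_ideal R e"
    using e idempotents_bool_join_closed bool_join_below
    unfolding principal_bool_ideal_def idempotents_def by auto
next
  fix f g assume f: "f \<in> principal_bool_ideal R e" and g: "g \<in> idempotents R" and gf: "g \<otimes> f = g"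
  have closed: "e \<in> carrier R" "f \<in> carrier R" "g \<in> carrier R" and fe: "f \<otimes> e = f"
    using e f g unfolding principal_bool_ideal_def idempotents_def by auto
  have "g \<otimes> e = g \<otimes> f \<otimes> e"
    using gf by simp
  also have "\<dots> = g \<otimes> (f \<otimes> e)"
    using closed by (simp add: m_assoc)
  finally have "g \<otimes> e = g"
    using fe gf by simp
  then show "g \<in> principal_bool_ideal R e"
    using g unfolding principal_bool_ideal_def by simp
qed

lemma bool_ideal_idempotents: "bool_ideal R (idempotents R)"
  unfolding bool_ideal_def using idempotents_bool_join_closed by (auto simp: idempotents_def)

lemma pierce_frame_antisym: "antisymp_on (fcarrier (pierce_frame R)) (fle (pierce_frame R))"
  unfolding pierce_frame_def antisymp_on_def by auto

lemma principal_bool_ideal_closed: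
  "e \<in> idempotents R \<Longrightarrow> principal_bool_ideal R e \<in> fcarrier (pierce_frame R)"
  unfolding pierce_frame_def using bool_ideal_principal by simp

lemma pierce_fbot: "fbot (pierce_frame R) = principal_bool_ideal R \<zero>"
proof -
  have "principal_bool_ideal R \<zero> = {\<zero>}"
    unfolding principal_bool_ideal_def idempotents_def by auto
  moreover have "is_lub (pierce_frame R) {} {\<zero>}"
    using bool_ideal_principal[of \<zero>] \<open>principal_bool_ideal R \<zero> = {\<zero>}\<close>
    unfolding is_lub_def pierce_frame_def bool_ideal_def by (auto simp: idempotents_def)
  ultimately show ?thesis
    unfolding fbot_def using fsup_eqI[OF pierce_frame_antisym] by simp
qed

lemma pierce_ftop: "ftop (pierce_frame R) = idempotents R"
  unfolding ftop_def
  by (rule fsup_eqI[OF pierce_frame_antisym])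
    (use bool_ideal_idempotents in \<open>auto simp: is_lub_def pierce_frame_def bool_ideal_def\<close>)

lemma principal_bool_ideal_mult:
  assumes e: "e \<in> idempotents R" and f: "f \<in> idempotents R"
  shows "principal_bool_ideal R (e \<otimes> f) = principal_bool_ideal R e \<inter> principal_bool_ideal R f"
proof -
  have closed: "e \<in> carrier R" "f \<in> carrier R" and idem: "e \<otimes> e = e" "f \<otimes> f = f"
    using e f by (simp_all add: idempotentsD)
  have "g \<otimes> (e \<otimes> f) = g \<longleftrightarrow> g \<otimes> e = g \<and> g \<otimes> f = g" if "g \<in> carrier R" for g
  proof
    assume g: "g \<otimes> (e \<otimes> f) = g"
    have "g \<otimes> e = g \<otimes> (e \<otimes> f) \<otimes> e" "g \<otimes> f = g \<otimes> (e \<otimes> f) \<otimes> f"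
      using g by simp_all
    moreover have "g \<otimes> (e \<otimes> f) \<otimes> e = g \<otimes> ((e \<otimes> e) \<otimes> f)"
      "g \<otimes> (e \<otimes> f) \<otimes> f = g \<otimes> (e \<otimes> (f \<otimes> f))"
      using that closed by algebra+
    ultimately show "g \<otimes> e = g \<and> g \<otimes> f = g"
      using g idem by simp
  next
    assume "g \<otimes> e = g \<and> g \<otimes> f = g"
    then show "g \<otimes> (e \<otimes> f) = g"
      using that closed by (simp add: m_assoc[symmetric])
  qed
  then show ?thesis
    unfolding principal_bool_ideal_def idempotents_def by auto
qed

lemma pierce_finf_principal:
  assumes e: "e \<in> idempotents R" and f: "f \<in> idempotents R"
  shows "finf (pierce_frame R) (principal_bool_ideal R e) (principal_bool_ideal R f)
    = principal_bool_ideal R (e \<otimes> f)"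
  by (rule finf_eqI[OF pierce_frame_antisym])
    (use principal_bool_ideal_mult[OF e f] principal_bool_ideal_closed[OF idempotents_mult_closed[OF e f]]
      in \<open>auto simp: is_glb_def pierce_frame_def\<close>)

lemma pierce_fsup_complementary:
  assumes e: "e \<in> idempotents R" and f: "f \<in> idempotents R"
    and orth: "e \<otimes> f = \<zero>" and sum: "e \<oplus> f = \<one>"
  shows "fsup (pierce_frame R) {principal_bool_ideal R e, principal_bool_ideal R f} = idempotents R"
proof (rule fsup_eqI[OF pierce_frame_antisym], unfold is_lub_def, intro conjI ballI impI)
  show "idempotents R \<in> fcarrier (pierce_frame R)"
    using bool_ideal_idempotents by (simp add: pierce_frame_def)
  show "fle (pierce_frame R) I (idempotents R)" if "I \<in> {principal_bool_ideal R e, principal_bool_ideal R f}" for I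
    using that unfolding pierce_frame_def principal_bool_ideal_def by auto
next
  fix J assume J: "J \<in> fcarrier (pierce_frame R)"
    and upper: "\<forall>I \<in> {principal_bool_ideal R e, principal_bool_ideal R f}. fle (pierce_frame R) I J"
  have "e \<in> J" "f \<in> J"
    using upper e f by (auto simp: pierce_frame_def principal_bool_ideal_def idempotentsD)
  moreover have "e \<oplus> f \<oplus> \<ominus> (e \<otimes> f) = \<one>"
    using orth sum by simp
  ultimately have "\<one> \<in> J"
    using J unfolding pierce_frame_def bool_ideal_def by force
  then have "idempotents R \<subseteq> J"
    using J unfolding pierce_frame_def bool_ideal_def idempotents_def by auto
  then show "fle (pierce_frame R) (idempotents R) J"
    by (simp add: pierce_frame_def)
qed

end

section \<open>Commutative subrings generated by commuting sets\<close>

definition commutant :: "('a, 'm) ring_scheme \<Rightarrow> 'a set \<Rightarrow> 'a set" where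
  "commutant R S = {x \<in> carrier R. \<forall>s \<in> S. x \<otimes>\<^bsub>R\<^esub> s = s \<otimes>\<^bsub>R\<^esub> x}"

definition bicommutant :: "('a, 'm) ring_scheme \<Rightarrow> 'a set \<Rightarrow> 'a set" where
  "bicommutant R S = commutant R (commutant R S)"

definition bicommutant_ring :: "('a, 'm) ring_scheme \<Rightarrow> 'a set \<Rightarrow> ('a, 'm) ring_scheme" where
  "bicommutant_ring R S = R\<lparr>carrier := bicommutant R S\<rparr>"

definition commuting_set :: "('a, 'm) ring_scheme \<Rightarrow> 'a set \<Rightarrow> bool" where
  "commuting_set R S \<longleftrightarrow> S \<subseteq> carrier R \<and> (\<forall>x \<in> S. \<forall>y \<in> S. x \<otimes>\<^bsub>R\<^esub> y = y \<otimes>\<^bsub>R\<^esub> x)"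

lemma bicommutant_ring_simps [simp]:
  "carrier (bicommutant_ring R S) = bicommutant R S"
  "\<zero>\<^bsub>bicommutant_ring R S\<^esub> = \<zero>\<^bsub>R\<^esub>" "\<one>\<^bsub>bicommutant_ring R S\<^esub> = \<one>\<^bsub>R\<^esub>"
  "x \<otimes>\<^bsub>bicommutant_ring R S\<^esub> y = x \<otimes>\<^bsub>R\<^esub> y" "x \<oplus>\<^bsub>bicommutant_ring R S\<^esub> y = x \<oplus>\<^bsub>R\<^esub> y"
  unfolding bicommutant_ring_def by simp_all

lemma bicommutant_subset: "bicommutant R S \<subseteq> carrier R"
  unfolding bicommutant_def commutant_def by blast

lemma idempotents_bicommutant_ring:
  "idempotents (bicommutant_ring R S) = bicommutant R S \<inter> idempotents R"
  unfolding idempotents_def using bicommutant_subset[of R S] by auto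

lemma commuting_subset: "commuting_set R S' \<Longrightarrow> S \<subseteq> S' \<Longrightarrow> commuting_set R S"
  unfolding commuting_set_def by blast

lemma ring_mor_restrict_id:
  assumes R: "ring R" and X: "subring X R" and "X \<subseteq> Y" "Y \<subseteq> carrier R"
  shows "ring_mor (R\<lparr>carrier := X\<rparr>) (R\<lparr>carrier := Y\<rparr>) (restrict id X)"
proof -
  have "restrict id X \<in> Ring.ring_hom (R\<lparr>carrier := X\<rparr>) (R\<lparr>carrier := Y\<rparr>)"
    by (rule ring_hom_memI) (use subringE[OF X] assms(3) in auto)
  then show ?thesis
    unfolding ring_mor_def by simp
qed

lemma compose_restrict_id: "X \<subseteq> Y \<Longrightarrow> compose X (restrict id Y) (restrict id X) = restrict id X"
  unfolding compose_def by (rule ext) (auto simp: restrict_def)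

context ring
begin

lemma subring_commutant:
  assumes S: "S \<subseteq> carrier R"
  shows "subring (commutant R S) R"
proof (rule subringI)
  show "commutant R S \<subseteq> carrier R" "\<one> \<in> commutant R S"
    using S unfolding commutant_def by auto
next
  fix x assume "x \<in> commutant R S"
  then show "\<ominus> x \<in> commutant R S"
    using S unfolding commutant_def by (auto simp: l_minus r_minus subset_iff)
next
  fix x y assume x: "x \<in> commutant R S" and y: "y \<in> commutant R S"
  then have closed: "x \<in> carrier R" "y \<in> carrier R"
    unfolding commutant_def by auto
  have "x \<otimes> y \<otimes> s = s \<otimes> (x \<otimes> y)" if "s \<in> S" for s
  proof -
    have s: "s \<in> carrier R" "x \<otimes> s = s \<otimes> x" "y \<otimes> s = s \<otimes> y"
      using that S x y unfolding commutant_def by auto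
    have "x \<otimes> y \<otimes> s = x \<otimes> (s \<otimes> y)"
      using closed s by (simp add: m_assoc)
    also have "\<dots> = s \<otimes> (x \<otimes> y)"
      using closed s by (simp add: m_assoc[symmetric])
    finally show ?thesis .
  qed
  then show "x \<otimes> y \<in> commutant R S"
    using closed unfolding commutant_def by auto
  show "x \<oplus> y \<in> commutant R S"
    using x y S unfolding commutant_def by (auto simp: l_distr r_distr subset_iff)
qed

lemma subset_commutant: "commuting_set R S \<Longrightarrow> S \<subseteq> commutant R S"
  unfolding commuting_set_def commutant_def by auto

lemma subset_bicommutant: "commuting_set R S \<Longrightarrow> S \<subseteq> bicommutant R S"
  unfolding commuting_set_def bicommutant_def commutant_def by auto

lemma bicommutant_subset_commutant: "commuting_set R S \<Longrightarrow> bicommutant R S \<subseteq> commutant R S"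
  using subset_commutant unfolding bicommutant_def commutant_def by blast

lemma bicommutant_mono: "S \<subseteq> S' \<Longrightarrow> bicommutant R S \<subseteq> bicommutant R S'"
  unfolding bicommutant_def commutant_def by auto

lemma subcring_bicommutant:
  assumes S: "commuting_set R S"
  shows "subcring (bicommutant R S) R"
proof (rule subcringI)
  show "subring (bicommutant R S) R"
    unfolding bicommutant_def by (rule subring_commutant) (auto simp: commutant_def)
next
  fix x y assume x: "x \<in> bicommutant R S" and "y \<in> bicommutant R S"
  then have "y \<in> commutant R S"
    using bicommutant_subset_commutant[OF S] by blast
  with x show "x \<otimes> y = y \<otimes> x"
    unfolding bicommutant_def commutant_def by blast
qed

lemma cring_bicommutant_ring: "commuting_set R S \<Longrightarrow> cring (bicommutant_ring R S)"
  unfolding bicommutant_ring_def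
  using subcring_iff[OF bicommutant_subset] subcring_bicommutant by blast

lemma commuting_bicommutant: "commuting_set R S \<Longrightarrow> commuting_set R (bicommutant R S)"
  using subcringE(1,8)[OF subcring_bicommutant] unfolding commuting_set_def by blast

lemma idempotent_bicommutant_ring:
  "commuting_set R S \<Longrightarrow> e \<in> S \<Longrightarrow> e \<in> idempotents R \<Longrightarrow> e \<in> idempotents (bicommutant_ring R S)"
  unfolding idempotents_bicommutant_ring using subset_bicommutant by blast

lemma one_minus_idempotent_bicommutant_ring:
  assumes S: "commuting_set R S" and e: "e \<in> idempotents (bicommutant_ring R S)"
  shows "\<one> \<ominus> e \<in> idempotents (bicommutant_ring R S)"
proof -
  have sub: "subcring (bicommutant R S) R"
    using subcring_bicommutant[OF S] .
  have e': "e \<in> bicommutant R S" "e \<in> idempotents R"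
    using e unfolding idempotents_bicommutant_ring by auto
  have "\<one> \<ominus> e \<in> bicommutant R S"
    unfolding a_minus_def using subcringE(7)[OF sub subcringE(3)[OF sub] subcringE(5)[OF sub e'(1)]] .
  then show ?thesis
    using one_minus_idempotent[OF e'(2)] unfolding idempotents_bicommutant_ring by blast
qed

lemma mult_idempotent_bicommutant_ring:
  assumes S: "commuting_set R S"
    and e: "e \<in> idempotents (bicommutant_ring R S)" and f: "f \<in> idempotents (bicommutant_ring R S)"
  shows "e \<otimes> f \<in> idempotents (bicommutant_ring R S)"
  using cring.idempotents_mult_closed[OF cring_bicommutant_ring[OF S] e f] by simp

end

definition ks_colouring :: "(nat \<times> nat \<times> nat) list \<Rightarrow> (nat \<Rightarrow> bool) \<Rightarrow> bool" where
  "ks_colouring T v \<longleftrightarrow>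
     (\<forall>(a, b, c) \<in> set T. (v a \<or> v b \<or> v c) \<and> \<not> (v a \<and> v b) \<and> \<not> (v a \<and> v c) \<and> \<not> (v b \<and> v c))"

section \<open>Opens of idempotents\<close>

locale pierce_extension = ring R for R :: "'a ring" (structure) +
  fixes Fo :: "'a ring \<Rightarrow> 'b frame_str"
    and Fm :: "'a ring \<Rightarrow> 'a ring \<Rightarrow> ('a \<Rightarrow> 'a) \<Rightarrow> 'b \<Rightarrow> 'b"
    and \<eta> :: "'a ring \<Rightarrow> 'b \<Rightarrow> 'a set"
  assumes is_functor: "ring_loc_functor Fo Fm"
    and \<eta>_iso: "\<And>C. cring C \<Longrightarrow> frame_iso (Fo C) (pierce_frame C) (\<eta> C)"
    and \<eta>_natural: "\<And>C D h x. cring C \<Longrightarrow> cring D \<Longrightarrow> ring_mor C D h \<Longrightarrow> x \<in> fcarrier (Fo C)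
        \<Longrightarrow> \<eta> D (Fm C D h x) = pierce_map C D h (\<eta> C x)"
begin

lemma frame_Fo: "ring C \<Longrightarrow> frame (Fo C)"
  using is_functor unfolding ring_loc_functor_def frame_def by (elim conjE) blast

lemma frame_hom_Fm: "ring C \<Longrightarrow> ring D \<Longrightarrow> ring_mor C D h \<Longrightarrow> frame_hom (Fo C) (Fo D) (Fm C D h)"
  using is_functor unfolding ring_loc_functor_def by (elim conjE) blast

lemma Fm_compose:
  "ring C \<Longrightarrow> ring D \<Longrightarrow> ring E \<Longrightarrow> ring_mor C D f \<Longrightarrow> ring_mor D E g \<Longrightarrow> x \<in> fcarrier (Fo C)
    \<Longrightarrow> Fm C E (compose (carrier C) g f) x = Fm D E g (Fm C D f x)"
  using is_functor unfolding ring_loc_functor_def by (elim conjE) blast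

lemma frame_R: "frame (Fo R)"
  using frame_Fo ring_axioms .

lemma ring_mor_bicommutant_ring_incl:
  assumes "commuting_set R S'" "S \<subseteq> S'"
  shows "ring_mor (bicommutant_ring R S) (bicommutant_ring R S') (restrict id (bicommutant R S))"
proof -
  have "subring (bicommutant R S) R"
    using subcring_bicommutant[OF commuting_subset[OF assms]] subcring.axioms(1) by blast
  then show ?thesis
    unfolding bicommutant_ring_def
    by (rule ring_mor_restrict_id[OF ring_axioms _ bicommutant_mono[OF assms(2)] bicommutant_subset])
qed

lemma ring_mor_bicommutant_ring_carrier:
  assumes "commuting_set R S"
  shows "ring_mor (bicommutant_ring R S) R (restrict id (bicommutant R S))"
proof -
  have "subring (bicommutant R S) R"
    using subcring_bicommutant[OF assms] subcring.axioms(1) by blast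
  then have "ring_mor (R\<lparr>carrier := bicommutant R S\<rparr>) (R\<lparr>carrier := carrier R\<rparr>) (restrict id (bicommutant R S))"
    by (rule ring_mor_restrict_id[OF ring_axioms _ bicommutant_subset order_refl])
  then show ?thesis
    unfolding bicommutant_ring_def by simp
qed

lemma commuting_set_singleton: "e \<in> carrier R \<Longrightarrow> commuting_set R {e}"
  unfolding commuting_set_def by simp

definition ctx_hom :: "'a set \<Rightarrow> 'a set \<Rightarrow> 'b" where
  "ctx_hom S = Fm (bicommutant_ring R S) R (restrict id (bicommutant R S))
     \<circ> inv_into (fcarrier (Fo (bicommutant_ring R S))) (\<eta> (bicommutant_ring R S))"

definition ctx_open :: "'a set \<Rightarrow> 'a \<Rightarrow> 'b" where
  "ctx_open S e = ctx_hom S (principal_bool_ideal (bicommutant_ring R S) e)"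

definition idem_open :: "'a \<Rightarrow> 'b" where
  "idem_open e = ctx_open {e} e"

lemma frame_hom_ctx_hom:
  assumes S: "commuting_set R S"
  shows "frame_hom (pierce_frame (bicommutant_ring R S)) (Fo R) (ctx_hom S)"
proof -
  have C: "cring (bicommutant_ring R S)"
    using cring_bicommutant_ring[OF S] .
  then have "frame (Fo (bicommutant_ring R S))"
    using frame_Fo cring.axioms(1) by blast
  then have "frame_hom (pierce_frame (bicommutant_ring R S)) (Fo (bicommutant_ring R S))
      (inv_into (fcarrier (Fo (bicommutant_ring R S))) (\<eta> (bicommutant_ring R S)))"
    using frame.frame_hom_inv_into[OF _ \<eta>_iso[OF C]] by blast
  moreover have "frame_hom (Fo (bicommutant_ring R S)) (Fo R)
      (Fm (bicommutant_ring R S) R (restrict id (bicommutant R S)))"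
    using frame_hom_Fm[OF cring.axioms(1)[OF C] ring_axioms ring_mor_bicommutant_ring_carrier[OF S]] .
  ultimately show ?thesis
    unfolding ctx_hom_def by (rule frame_hom_comp)
qed

lemma ctx_open_closed:
  assumes S: "commuting_set R S" and e: "e \<in> idempotents (bicommutant_ring R S)"
  shows "ctx_open S e \<in> fcarrier (Fo R)"
  unfolding ctx_open_def
  by (rule frame_hom_closed[OF frame_hom_ctx_hom[OF S]
        cring.principal_bool_ideal_closed[OF cring_bicommutant_ring[OF S] e]])

lemma ctx_open_zero:
  assumes S: "commuting_set R S"
  shows "ctx_open S \<zero> = fbot (Fo R)"
proof -
  have "fbot (pierce_frame (bicommutant_ring R S)) = principal_bool_ideal (bicommutant_ring R S) \<zero>"
    using cring.pierce_fbot[OF cring_bicommutant_ring[OF S]] by simp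
  then show ?thesis
    unfolding ctx_open_def using frame_hom_fbot[OF frame_hom_ctx_hom[OF S]] by simp
qed

lemma ctx_open_mult:
  assumes S: "commuting_set R S"
    and e: "e \<in> idempotents (bicommutant_ring R S)" and f: "f \<in> idempotents (bicommutant_ring R S)"
  shows "finf (Fo R) (ctx_open S e) (ctx_open S f) = ctx_open S (e \<otimes> f)"
proof -
  interpret C: cring "bicommutant_ring R S"
    using cring_bicommutant_ring[OF S] .
  show ?thesis
    unfolding ctx_open_def
    using frame_hom_finf[OF frame_hom_ctx_hom[OF S] C.principal_bool_ideal_closed[OF e]
        C.principal_bool_ideal_closed[OF f]] C.pierce_finf_principal[OF e f]
    by simp
qed

lemma ctx_open_one_minus:
  assumes S: "commuting_set R S" and e: "e \<in> idempotents (bicommutant_ring R S)"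
  shows "fsup (Fo R) {ctx_open S e, ctx_open S (\<one> \<ominus> e)} = ftop (Fo R)"
proof -
  interpret C: cring "bicommutant_ring R S"
    using cring_bicommutant_ring[OF S] .
  have e': "\<one> \<ominus> e \<in> idempotents (bicommutant_ring R S)"
    using one_minus_idempotent_bicommutant_ring[OF S e] .
  have eR: "e \<in> idempotents R"
    using e unfolding idempotents_bicommutant_ring by blast
  let ?I = "principal_bool_ideal (bicommutant_ring R S) e"
    and ?J = "principal_bool_ideal (bicommutant_ring R S) (\<one> \<ominus> e)"
  have "fsup (pierce_frame (bicommutant_ring R S)) {?I, ?J} = ftop (pierce_frame (bicommutant_ring R S))"
    using C.pierce_fsup_complementary[OF e e'] C.pierce_ftop mult_one_minus_idempotent[OF eR]
      add_one_minus[OF idempotentsD(1)[OF eR]] by simp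
  moreover have "{?I, ?J} \<subseteq> fcarrier (pierce_frame (bicommutant_ring R S))"
    using C.principal_bool_ideal_closed[OF e] C.principal_bool_ideal_closed[OF e'] by simp
  then have "fsup (Fo R) {ctx_hom S ?I, ctx_hom S ?J} = ctx_hom S (fsup (pierce_frame (bicommutant_ring R S)) {?I, ?J})"
    using frame_hom_fsup[OF frame_hom_ctx_hom[OF S]] by simp
  ultimately show ?thesis
    unfolding ctx_open_def using frame_hom_ftop[OF frame_hom_ctx_hom[OF S]] by simp
qed

lemma pierce_map_principal:
  assumes "S \<subseteq> S'" and e: "e \<in> idempotents (bicommutant_ring R S)"
  shows "pierce_map (bicommutant_ring R S) (bicommutant_ring R S') (restrict id (bicommutant R S))
      (principal_bool_ideal (bicommutant_ring R S) e) = principal_bool_ideal (bicommutant_ring R S') e"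
proof -
  have e': "e \<in> bicommutant R S" "e \<in> carrier R" "e \<otimes> e = e"
    using e bicommutant_subset[of R S] unfolding idempotents_bicommutant_ring idempotents_def by auto
  show ?thesis
  proof (intro equalityI subsetI)
    fix f assume "f \<in> pierce_map (bicommutant_ring R S) (bicommutant_ring R S') (restrict id (bicommutant R S))
      (principal_bool_ideal (bicommutant_ring R S) e)"
    then obtain g where f: "f \<in> idempotents (bicommutant_ring R S')"
      and g: "g \<in> bicommutant R S" "g \<otimes> e = g" and fg: "f \<otimes> g = f"
      unfolding pierce_map_def principal_bool_ideal_def idempotents_bicommutant_ring by auto
    have closed: "f \<in> carrier R" "g \<in> carrier R"
      using f g(1) bicommutant_subset[of R S] bicommutant_subset[of R S'] unfolding idempotents_bicommutant_ring idempotents_def by auto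
    have "f \<otimes> e = f \<otimes> g \<otimes> e"
      using fg by simp
    also have "\<dots> = f \<otimes> (g \<otimes> e)"
      using closed e'(2) by (simp add: m_assoc)
    finally have "f \<otimes> e = f"
      using g(2) fg by simp
    then show "f \<in> principal_bool_ideal (bicommutant_ring R S') e"
      using f unfolding principal_bool_ideal_def by simp
  next
    fix f assume "f \<in> principal_bool_ideal (bicommutant_ring R S') e"
    then show "f \<in> pierce_map (bicommutant_ring R S) (bicommutant_ring R S') (restrict id (bicommutant R S))
      (principal_bool_ideal (bicommutant_ring R S) e)"
      using e e' unfolding pierce_map_def principal_bool_ideal_def by auto
  qed
qed

text \<open>This is where naturality of \<open>\<eta>\<close> enters.\<close>

lemma ctx_open_extend:
  assumes S': "commuting_set R S'" and SS': "S \<subseteq> S'" and e: "e \<in> idempotents (bicommutant_ring R S)"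
  shows "ctx_open S e = ctx_open S' e"
proof -
  let ?C = "bicommutant_ring R S" and ?C' = "bicommutant_ring R S'"
  let ?i = "restrict id (bicommutant R S)" and ?i' = "restrict id (bicommutant R S')"
  have S: "commuting_set R S"
    using commuting_subset[OF S' SS'] .
  have C: "cring ?C" "cring ?C'"
    using cring_bicommutant_ring S S' by blast+
  then have rings: "ring ?C" "ring ?C'"
    using cring.axioms(1) by blast+
  have i: "ring_mor ?C ?C' ?i"
    using ring_mor_bicommutant_ring_incl[OF S' SS'] .
  have bij: "bij_betw (\<eta> ?C) (fcarrier (Fo ?C)) (fcarrier (pierce_frame ?C))"
    "bij_betw (\<eta> ?C') (fcarrier (Fo ?C')) (fcarrier (pierce_frame ?C'))"
    using \<eta>_iso C unfolding frame_iso_def by blast+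
  define x where "x = inv_into (fcarrier (Fo ?C)) (\<eta> ?C) (principal_bool_ideal ?C e)"
  have "principal_bool_ideal ?C e \<in> fcarrier (pierce_frame ?C)"
    using cring.principal_bool_ideal_closed[OF C(1) e] .
  then have x: "x \<in> fcarrier (Fo ?C)" "\<eta> ?C x = principal_bool_ideal ?C e"
    unfolding x_def using bij(1) by (meson bij_betw_apply bij_betw_inv_into, meson bij_betw_inv_into_right)
  have y: "Fm ?C ?C' ?i x \<in> fcarrier (Fo ?C')"
    using frame_hom_closed[OF frame_hom_Fm[OF rings i] x(1)] .
  have "\<eta> ?C' (Fm ?C ?C' ?i x) = principal_bool_ideal ?C' e"
    using \<eta>_natural[OF C i x(1)] x(2) pierce_map_principal[OF SS' e] by simp
  then have "inv_into (fcarrier (Fo ?C')) (\<eta> ?C') (principal_bool_ideal ?C' e) = Fm ?C ?C' ?i x"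
    using bij(2) y by (metis bij_betw_inv_into_left)
  moreover have "Fm ?C R ?i x = Fm ?C' R ?i' (Fm ?C ?C' ?i x)"
    using Fm_compose[OF rings ring_axioms i ring_mor_bicommutant_ring_carrier[OF S'] x(1)]
      compose_restrict_id[OF bicommutant_mono[OF SS']] by simp
  ultimately show ?thesis
    unfolding ctx_open_def ctx_hom_def x_def by simp
qed

lemma ctx_open_eq_idem_open:
  assumes S: "commuting_set R S" and e: "e \<in> idempotents (bicommutant_ring R S)"
  shows "ctx_open S e = idem_open e"
proof -
  have B: "commuting_set R (bicommutant R S)"
    using commuting_bicommutant[OF S] .
  have e': "e \<in> bicommutant R S" "e \<in> idempotents R"
    using e unfolding idempotents_bicommutant_ring by blast+
  have "ctx_open S e = ctx_open (bicommutant R S) e"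
    using ctx_open_extend[OF B subset_bicommutant[OF S] e] .
  also have "\<dots> = ctx_open {e} e"
    using ctx_open_extend[OF B _ idempotent_bicommutant_ring] e' idempotentsD(1)
      commuting_set_singleton by simp
  finally show ?thesis
    unfolding idem_open_def .
qed

lemma idempotent_bicommutant_ring_singleton:
  "e \<in> idempotents R \<Longrightarrow> e \<in> idempotents (bicommutant_ring R {e})"
  using idempotent_bicommutant_ring[OF commuting_set_singleton[OF idempotentsD(1)]] by blast

lemma idem_open_closed: "e \<in> idempotents R \<Longrightarrow> idem_open e \<in> fcarrier (Fo R)"
  unfolding idem_open_def
  using ctx_open_closed[OF commuting_set_singleton[OF idempotentsD(1)] idempotent_bicommutant_ring_singleton]
  by blast

lemma idem_open_zero: "idem_open \<zero> = fbot (Fo R)"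
  unfolding idem_open_def using ctx_open_zero commuting_set_singleton by simp

lemma idem_open_one_minus:
  assumes e: "e \<in> idempotents R"
  shows "fsup (Fo R) {idem_open e, idem_open (\<one> \<ominus> e)} = ftop (Fo R)"
proof -
  have S: "commuting_set R {e}" and e': "e \<in> idempotents (bicommutant_ring R {e})"
    using commuting_set_singleton[OF idempotentsD(1)[OF e]] idempotent_bicommutant_ring_singleton[OF e] .
  then show ?thesis
    using ctx_open_one_minus[OF S e'] ctx_open_eq_idem_open[OF S e']
      ctx_open_eq_idem_open[OF S one_minus_idempotent_bicommutant_ring[OF S e']] by simp
qed

lemma idem_open_mult:
  assumes S: "commuting_set R S"
    and e: "e \<in> idempotents (bicommutant_ring R S)" and f: "f \<in> idempotents (bicommutant_ring R S)"
  shows "finf (Fo R) (idem_open e) (idem_open f) = idem_open (e \<otimes> f)"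
  using ctx_open_mult[OF S e f] ctx_open_eq_idem_open[OF S] e f mult_idempotent_bicommutant_ring[OF S e f]
  by simp

lemma fle_idem_open_mult:
  assumes S: "commuting_set R S"
    and e: "e \<in> idempotents (bicommutant_ring R S)" and f: "f \<in> idempotents (bicommutant_ring R S)"
    and U: "U \<in> fcarrier (Fo R)" "fle (Fo R) U (idem_open e)" "fle (Fo R) U (idem_open f)"
  shows "fle (Fo R) U (idem_open (e \<otimes> f))"
proof -
  have "e \<in> idempotents R" "f \<in> idempotents R"
    using e f unfolding idempotents_bicommutant_ring by blast+
  then show ?thesis
    using frame.finf_greatest[OF frame_R idem_open_closed idem_open_closed U] idem_open_mult[OF S e f]
    by simp
qed

lemma commuting_set_partition4: "idem_partition4 R a b c d \<Longrightarrow> commuting_set R {a, b, c, d}"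
  unfolding idem_partition4_def orthogonal_def commuting_set_def idempotents_def by auto

lemma below_orthogonal_idem_opens_eq_fbot:
  assumes a: "a \<in> idempotents R" and b: "b \<in> idempotents R" and ab: "orthogonal R a b"
    and U: "U \<in> fcarrier (Fo R)" "fle (Fo R) U (idem_open a)" "fle (Fo R) U (idem_open b)"
  shows "U = fbot (Fo R)"
proof -
  have S: "commuting_set R {a, b}"
    using a b ab unfolding orthogonal_def commuting_set_def idempotents_def by auto
  have "fle (Fo R) U (idem_open (a \<otimes> b))"
    using fle_idem_open_mult[OF S idempotent_bicommutant_ring[OF S _ a] idempotent_bicommutant_ring[OF S _ b] U]
    by simp
  then show ?thesis
    using ab idem_open_zero frame.fle_fbot_eq[OF frame_R U(1)] unfolding orthogonal_def by simp
qed

lemma below_one_minus_partition4_opens_eq_fbot: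
  assumes abcd: "idem_partition4 R a b c d" and U: "U \<in> fcarrier (Fo R)"
    and below: "\<forall>x \<in> {a, b, c, d}. fle (Fo R) U (idem_open (\<one> \<ominus> x))"
  shows "U = fbot (Fo R)"
proof -
  let ?S = "{a, b, c, d}"
  have S: "commuting_set R ?S"
    using commuting_set_partition4[OF abcd] .
  have "\<one> \<ominus> x \<in> idempotents (bicommutant_ring R ?S)" if "x \<in> ?S" for x
    using one_minus_idempotent_bicommutant_ring[OF S idempotent_bicommutant_ring[OF S that]] that abcd
    unfolding idem_partition4_def by blast
  then have ca: "\<one> \<ominus> a \<in> idempotents (bicommutant_ring R ?S)"
    and cb: "\<one> \<ominus> b \<in> idempotents (bicommutant_ring R ?S)"
    and cc: "\<one> \<ominus> c \<in> idempotents (bicommutant_ring R ?S)"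
    and cd: "\<one> \<ominus> d \<in> idempotents (bicommutant_ring R ?S)"
    by simp_all
  note mult = mult_idempotent_bicommutant_ring[OF S] and fle_mult = fle_idem_open_mult[OF S _ _ U]
  have "fle (Fo R) U (idem_open ((\<one> \<ominus> a) \<otimes> (\<one> \<ominus> b)))"
    using fle_mult[OF ca cb] below by simp
  then have "fle (Fo R) U (idem_open ((\<one> \<ominus> a) \<otimes> (\<one> \<ominus> b) \<otimes> (\<one> \<ominus> c)))"
    using fle_mult[OF mult[OF ca cb] cc] below by simp
  then have "fle (Fo R) U (idem_open ((\<one> \<ominus> a) \<otimes> (\<one> \<ominus> b) \<otimes> (\<one> \<ominus> c) \<otimes> (\<one> \<ominus> d)))"
    using fle_mult[OF mult[OF mult[OF ca cb] cc] cd] below by simp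
  then show ?thesis
    using one_minus_mult_partition4[OF abcd] idem_open_zero frame.fle_fbot_eq[OF frame_R U] by simp
qed

text \<open>At most one colour per triple by orthogonality, and at least one because the
  complements \<open>1 - E a, 1 - E b, 1 - E c, 1 - q\<close> multiply to \<open>0\<close>.\<close>

lemma ks_colouring_of_deciding_open:
  assumes E: "\<And>r. r < N \<Longrightarrow> E r \<in> idempotents R"
    and T: "\<And>a b c. (a, b, c) \<in> set T \<Longrightarrow> a < N \<and> b < N \<and> c < N \<and> idem_partition4 R (E a) (E b) (E c) q"
    and U: "U \<in> fcarrier (Fo R)" "U \<noteq> fbot (Fo R)" "fle (Fo R) U (idem_open (\<one> \<ominus> q))"
    and decides: "\<And>r. r < N \<Longrightarrow> fle (Fo R) U (idem_open (E r)) \<or> fle (Fo R) U (idem_open (\<one> \<ominus> E r))"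
  shows "ks_colouring T (\<lambda>r. fle (Fo R) U (idem_open (E r)))"
    (is "ks_colouring T ?v")
  unfolding ks_colouring_def
proof (intro ballI, clarify)
  fix a b c assume "(a, b, c) \<in> set T"
  then have lt: "a < N" "b < N" "c < N" and abcq: "idem_partition4 R (E a) (E b) (E c) q"
    using T by auto
  have "?v a \<or> ?v b \<or> ?v c"
  proof (rule ccontr)
    assume "\<not> (?v a \<or> ?v b \<or> ?v c)"
    then have "\<forall>x \<in> {E a, E b, E c, q}. fle (Fo R) U (idem_open (\<one> \<ominus> x))"
      using decides lt U(3) by auto
    then show False
      using below_one_minus_partition4_opens_eq_fbot[OF abcq U(1)] U(2) by blast
  qed
  moreover have "\<not> (?v x \<and> ?v y)" if "orthogonal R (E x) (E y)" "x < N" "y < N" for x y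
    using below_orthogonal_idem_opens_eq_fbot[OF E[OF that(2)] E[OF that(3)] that(1) U(1)] U(2) by blast
  ultimately show "(?v a \<or> ?v b \<or> ?v c) \<and> \<not> (?v a \<and> ?v b) \<and> \<not> (?v a \<and> ?v c) \<and> \<not> (?v b \<and> ?v c)"
    using abcq lt unfolding idem_partition4_def by blast
qed

lemma idem_open_one_minus_bot_if_uncolourable:
  assumes E: "\<And>r. r < N \<Longrightarrow> E r \<in> idempotents R"
    and T: "\<And>a b c. (a, b, c) \<in> set T \<Longrightarrow> a < N \<and> b < N \<and> c < N \<and> idem_partition4 R (E a) (E b) (E c) q"
    and q: "q \<in> idempotents R"
    and uncolourable: "\<And>v. \<not> ks_colouring T v"
  shows "idem_open (\<one> \<ominus> q) = fbot (Fo R)"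
proof (rule ccontr)
  assume nonbot: "idem_open (\<one> \<ominus> q) \<noteq> fbot (Fo R)"
  let ?covers = "map (\<lambda>r. (idem_open (E r), idem_open (\<one> \<ominus> E r))) [0..<N]"
  have "\<forall>(x, y) \<in> set ?covers. x \<in> fcarrier (Fo R) \<and> y \<in> fcarrier (Fo R) \<and> fsup (Fo R) {x, y} = ftop (Fo R)"
    using E idem_open_closed one_minus_idempotent idem_open_one_minus by auto
  then obtain U where U: "U \<in> fcarrier (Fo R)" "U \<noteq> fbot (Fo R)" "fle (Fo R) U (idem_open (\<one> \<ominus> q))"
    and "\<forall>(x, y) \<in> set ?covers. fle (Fo R) U x \<or> fle (Fo R) U y"
    using frame.nonbot_below_deciding_covers[OF frame_R _ idem_open_closed[OF one_minus_idempotent[OF q]] nonbot]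
    by blast
  then have "\<And>r. r < N \<Longrightarrow> fle (Fo R) U (idem_open (E r)) \<or> fle (Fo R) U (idem_open (\<one> \<ominus> E r))"
    by auto
  then show False
    using ks_colouring_of_deciding_open[OF E T U] uncolourable by blast
qed

end

section \<open>Kochen--Specker projections in matrix rings\<close>

definition coord :: "int \<times> int \<times> int \<Rightarrow> nat \<Rightarrow> int" where
  "coord u i = (if i = 0 then fst u else if i = 1 then fst (snd u) else snd (snd u))"

definition sqnorm3 :: "int \<times> int \<times> int \<Rightarrow> int" where
  "sqnorm3 u = coord u 0 * coord u 0 + coord u 1 * coord u 1 + coord u 2 * coord u 2"

definition dot3 :: "int \<times> int \<times> int \<Rightarrow> int \<times> int \<times> int \<Rightarrow> int" where
  "dot3 u v = coord u 0 * coord v 0 + coord u 1 * coord v 1 + coord u 2 * coord v 2"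

text \<open>The rank one projections \<open>u u\<^sup>T / |u|\<^sup>2\<close>, \<open>v v\<^sup>T / |v|\<^sup>2\<close>, \<open>w w\<^sup>T / |w|\<^sup>2\<close> sum to the identity
  of \<open>\<complex>\<^sup>3\<close>, with the denominators cleared.\<close>

definition resolves_identity :: "int \<times> int \<times> int \<Rightarrow> int \<times> int \<times> int \<Rightarrow> int \<times> int \<times> int \<Rightarrow> bool" where
  "resolves_identity u v w \<longleftrightarrow> (\<forall>i \<in> {0, 1, 2}. \<forall>j \<in> {0, 1, 2}.
      coord u i * coord u j * sqnorm3 v * sqnorm3 w + coord v i * coord v j * sqnorm3 u * sqnorm3 w
        + coord w i * coord w j * sqnorm3 u * sqnorm3 v
      = (if i = j then sqnorm3 u * sqnorm3 v * sqnorm3 w else 0))"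

text \<open>Vectors of \<open>\<int>\<^sup>3\<close> are placed on the coordinates \<open>0, 1, k\<close> of \<open>\<complex>\<^sup>n\<close>, where \<open>2 \<le> k < n\<close>.\<close>

definition triad :: "nat \<Rightarrow> nat set" where
  "triad k = {0, 1, k}"

definition triad_pos :: "nat \<Rightarrow> nat" where
  "triad_pos a = (if a = 0 then 0 else if a = 1 then 1 else 2)"

definition triad_embed :: "nat \<Rightarrow> int \<times> int \<times> int \<Rightarrow> nat \<Rightarrow> complex" where
  "triad_embed k u a = (if a \<in> triad k then of_int (coord u (triad_pos a)) else 0)"

definition ray_proj :: "nat \<Rightarrow> nat \<Rightarrow> int \<times> int \<times> int \<Rightarrow> complex mat" where
  "ray_proj n k u = mat n n (\<lambda>(a, b). triad_embed k u a * triad_embed k u b / of_int (sqnorm3 u))"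

definition diag_proj :: "nat \<Rightarrow> (nat \<Rightarrow> bool) \<Rightarrow> complex mat" where
  "diag_proj n p = mat n n (\<lambda>(a, b). if a = b \<and> p a then 1 else 0)"

definition triad_compl_proj :: "nat \<Rightarrow> nat \<Rightarrow> complex mat" where
  "triad_compl_proj n k = diag_proj n (\<lambda>a. a \<notin> triad k)"

lemma dot3_commute: "dot3 u v = dot3 v u"
  unfolding dot3_def by simp

lemma index_mult_mat_sum:
  assumes "A \<in> carrier_mat n n" "B \<in> carrier_mat n n" "a < n" "b < n"
  shows "(A * B) $$ (a, b) = (\<Sum>c<n. A $$ (a, c) * B $$ (c, b))"
  using assms by (simp add: scalar_prod_def lessThan_atLeast0)

lemma sum_triad:
  assumes k: "2 \<le> k" "k < n" and f: "\<And>a. a \<notin> triad k \<Longrightarrow> f a = 0"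
  shows "(\<Sum>c<n. f c) = f 0 + f 1 + f k"
proof -
  have "(\<Sum>c<n. f c) = (\<Sum>c \<in> triad k. f c)"
    by (rule sum.mono_neutral_right) (use k f in \<open>auto simp: triad_def\<close>)
  also have "\<dots> = f 0 + f 1 + f k"
    using k by (simp add: triad_def add.assoc)
  finally show ?thesis .
qed

lemma sum_triad_embed:
  assumes "2 \<le> k" "k < n"
  shows "(\<Sum>c<n. triad_embed k u c * triad_embed k v c) = of_int (dot3 u v)"
  using assms by (subst sum_triad) (auto simp: triad_embed_def triad_def triad_pos_def dot3_def)

lemma ray_proj_carrier: "ray_proj n k u \<in> carrier_mat n n"
  unfolding ray_proj_def by simp

lemma diag_proj_carrier: "diag_proj n p \<in> carrier_mat n n"
  unfolding diag_proj_def by simp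

lemma triad_compl_proj_carrier: "triad_compl_proj n k \<in> carrier_mat n n"
  unfolding triad_compl_proj_def by (rule diag_proj_carrier)

lemma ray_proj_mult:
  assumes k: "2 \<le> k" "k < n"
  shows "ray_proj n k u * ray_proj n k v = mat n n (\<lambda>(a, b).
    triad_embed k u a * triad_embed k v b * of_int (dot3 u v) / (of_int (sqnorm3 u) * of_int (sqnorm3 v)))"
    (is "_ = mat n n ?f")
proof (rule eq_matI)
  fix a b assume "a < dim_row (mat n n ?f)" "b < dim_col (mat n n ?f)"
  then have a: "a < n" and b: "b < n"
    by auto
  let ?c = "triad_embed k u a * triad_embed k v b * inverse (of_int (sqnorm3 u)) * inverse (of_int (sqnorm3 v))"
  have "(ray_proj n k u * ray_proj n k v) $$ (a, b)
      = (\<Sum>c<n. ray_proj n k u $$ (a, c) * ray_proj n k v $$ (c, b))"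
    by (rule index_mult_mat_sum[OF ray_proj_carrier ray_proj_carrier a b])
  also have "\<dots> = (\<Sum>c<n. ?c * (triad_embed k u c * triad_embed k v c))"
    by (rule sum.cong[OF refl]) (use a b in \<open>simp add: ray_proj_def divide_inverse mult_ac\<close>)
  also have "\<dots> = ?c * of_int (dot3 u v)"
    by (simp add: sum_distrib_left[symmetric] sum_triad_embed[OF k])
  also have "\<dots> = mat n n ?f $$ (a, b)"
    using a b by (simp add: divide_inverse mult_ac)
  finally show "(ray_proj n k u * ray_proj n k v) $$ (a, b) = mat n n ?f $$ (a, b)" .
qed (auto simp: ray_proj_def)

lemma ray_proj_mult_orthogonal:
  "2 \<le> k \<Longrightarrow> k < n \<Longrightarrow> dot3 u v = 0 \<Longrightarrow> ray_proj n k u * ray_proj n k v = 0\<^sub>m n n"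
  by (subst ray_proj_mult) (auto intro!: eq_matI)

lemma ray_proj_idem:
  assumes "2 \<le> k" "k < n" "sqnorm3 u \<noteq> 0"
  shows "ray_proj n k u * ray_proj n k u = ray_proj n k u"
proof -
  have "dot3 u u = sqnorm3 u"
    unfolding dot3_def sqnorm3_def by simp
  then show ?thesis
    using assms by (subst ray_proj_mult) (auto intro!: eq_matI simp: ray_proj_def)
qed

lemma diag_proj_mult: "diag_proj n p * diag_proj n p' = diag_proj n (\<lambda>a. p a \<and> p' a)"
proof (rule eq_matI)
  fix a b assume "a < dim_row (diag_proj n (\<lambda>a. p a \<and> p' a))" "b < dim_col (diag_proj n (\<lambda>a. p a \<and> p' a))"
  then have a: "a < n" and b: "b < n"
    by (auto simp: diag_proj_def)
  have "(diag_proj n p * diag_proj n p') $$ (a, b) = (\<Sum>c<n. diag_proj n p $$ (a, c) * diag_proj n p' $$ (c, b))"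
    by (rule index_mult_mat_sum[OF diag_proj_carrier diag_proj_carrier a b])
  also have "\<dots> = (\<Sum>c<n. if c = a then (if a = b \<and> p a \<and> p' a then 1 else 0) else 0)"
    by (rule sum.cong[OF refl]) (use a b in \<open>auto simp: diag_proj_def\<close>)
  also have "\<dots> = diag_proj n (\<lambda>a. p a \<and> p' a) $$ (a, b)"
    using a b by (simp add: diag_proj_def)
  finally show "(diag_proj n p * diag_proj n p') $$ (a, b) = diag_proj n (\<lambda>a. p a \<and> p' a) $$ (a, b)" .
qed (auto simp: diag_proj_def)

lemma ray_proj_triad_compl_proj:
  assumes "2 \<le> k" "k < n"
  shows "ray_proj n k u * triad_compl_proj n k = 0\<^sub>m n n" "triad_compl_proj n k * ray_proj n k u = 0\<^sub>m n n"
proof -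
  show "ray_proj n k u * triad_compl_proj n k = 0\<^sub>m n n"
  proof (rule eq_matI)
    fix a b assume "a < dim_row (0\<^sub>m n n :: complex mat)" "b < dim_col (0\<^sub>m n n :: complex mat)"
    then have a: "a < n" and b: "b < n"
      by auto
    have "(ray_proj n k u * triad_compl_proj n k) $$ (a, b)
        = (\<Sum>c<n. ray_proj n k u $$ (a, c) * triad_compl_proj n k $$ (c, b))"
      by (rule index_mult_mat_sum[OF ray_proj_carrier triad_compl_proj_carrier a b])
    also have "\<dots> = (\<Sum>c<n. 0)"
      by (rule sum.cong[OF refl])
        (use a b in \<open>auto simp: ray_proj_def triad_compl_proj_def diag_proj_def triad_embed_def\<close>)
    finally show "(ray_proj n k u * triad_compl_proj n k) $$ (a, b) = 0\<^sub>m n n $$ (a, b)"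
      using a b by simp
  qed (auto simp: ray_proj_def triad_compl_proj_def diag_proj_def)
  show "triad_compl_proj n k * ray_proj n k u = 0\<^sub>m n n"
  proof (rule eq_matI)
    fix a b assume "a < dim_row (0\<^sub>m n n :: complex mat)" "b < dim_col (0\<^sub>m n n :: complex mat)"
    then have a: "a < n" and b: "b < n"
      by auto
    have "(triad_compl_proj n k * ray_proj n k u) $$ (a, b)
        = (\<Sum>c<n. triad_compl_proj n k $$ (a, c) * ray_proj n k u $$ (c, b))"
      by (rule index_mult_mat_sum[OF triad_compl_proj_carrier ray_proj_carrier a b])
    also have "\<dots> = (\<Sum>c<n. 0)"
      by (rule sum.cong[OF refl])
        (use a b in \<open>auto simp: ray_proj_def triad_compl_proj_def diag_proj_def triad_embed_def\<close>)
    finally show "(triad_compl_proj n k * ray_proj n k u) $$ (a, b) = 0\<^sub>m n n $$ (a, b)"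
      using a b by simp
  qed (auto simp: ray_proj_def triad_compl_proj_def diag_proj_def)
qed

lemma sum_three_fractions:
  fixes A B C D p q r :: int
  assumes nz: "p \<noteq> 0" "q \<noteq> 0" "r \<noteq> 0" and eq: "A * q * r + B * p * r + C * p * q = D * p * q * r"
  shows "of_int A / of_int p + of_int B / of_int q + of_int C / of_int r = (of_int D :: complex)"
proof -
  have "(of_int (A * q * r + B * p * r + C * p * q) :: complex) = of_int (D * p * q * r)"
    by (simp only: eq)
  then show ?thesis
    using nz by (simp add: field_simps)
qed

lemma triad_pos_eq: "2 \<le> k \<Longrightarrow> a \<in> triad k \<Longrightarrow> b \<in> triad k \<Longrightarrow> triad_pos a = triad_pos b \<longleftrightarrow> a = b"
  unfolding triad_def triad_pos_def by auto

lemma triad_embed_resolves_identity: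
  assumes k: "2 \<le> k" and uvw: "resolves_identity u v w"
    and nz: "sqnorm3 u \<noteq> 0" "sqnorm3 v \<noteq> 0" "sqnorm3 w \<noteq> 0" and ab: "a \<in> triad k" "b \<in> triad k"
  shows "triad_embed k u a * triad_embed k u b / of_int (sqnorm3 u)
    + triad_embed k v a * triad_embed k v b / of_int (sqnorm3 v)
    + triad_embed k w a * triad_embed k w b / of_int (sqnorm3 w) = (if a = b then 1 else 0)"
proof -
  let ?i = "triad_pos a" and ?j = "triad_pos b"
  have "?i \<in> {0, 1, 2}" "?j \<in> {0, 1, 2}"
    unfolding triad_pos_def by auto
  then have "coord u ?i * coord u ?j * sqnorm3 v * sqnorm3 w + coord v ?i * coord v ?j * sqnorm3 u * sqnorm3 w
      + coord w ?i * coord w ?j * sqnorm3 u * sqnorm3 v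
    = (if ?i = ?j then sqnorm3 u * sqnorm3 v * sqnorm3 w else 0)"
    using uvw unfolding resolves_identity_def by blast
  moreover have "?i = ?j \<longleftrightarrow> a = b"
    using triad_pos_eq[OF k] ab by blast
  ultimately have "(coord u ?i * coord u ?j) * sqnorm3 v * sqnorm3 w + (coord v ?i * coord v ?j) * sqnorm3 u * sqnorm3 w
      + (coord w ?i * coord w ?j) * sqnorm3 u * sqnorm3 v
    = (if a = b then 1 else 0) * sqnorm3 u * sqnorm3 v * sqnorm3 w"
    by (simp add: mult.assoc)
  from sum_three_fractions[OF nz this]
  show ?thesis
    using ab unfolding triad_embed_def by simp
qed

lemma ray_projs_sum:
  assumes k: "2 \<le> k" "k < n" and uvw: "resolves_identity u v w"
    and nz: "sqnorm3 u \<noteq> 0" "sqnorm3 v \<noteq> 0" "sqnorm3 w \<noteq> 0"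
  shows "ray_proj n k u + ray_proj n k v + ray_proj n k w + triad_compl_proj n k = 1\<^sub>m n"
proof (rule eq_matI)
  fix a b assume "a < dim_row (1\<^sub>m n :: complex mat)" "b < dim_col (1\<^sub>m n :: complex mat)"
  then have a: "a < n" and b: "b < n"
    by auto
  let ?e = "triad_embed k"
  have lhs: "(ray_proj n k u + ray_proj n k v + ray_proj n k w + triad_compl_proj n k) $$ (a, b) =
    ?e u a * ?e u b / of_int (sqnorm3 u) + ?e v a * ?e v b / of_int (sqnorm3 v)
      + ?e w a * ?e w b / of_int (sqnorm3 w) + (if a = b \<and> a \<notin> triad k then 1 else 0)"
    using a b by (simp add: ray_proj_def triad_compl_proj_def diag_proj_def)
  show "(ray_proj n k u + ray_proj n k v + ray_proj n k w + triad_compl_proj n k) $$ (a, b) = 1\<^sub>m n $$ (a, b)"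
  proof (cases "a \<in> triad k \<and> b \<in> triad k")
    case True
    then show ?thesis
      using lhs a b triad_embed_resolves_identity[OF k(1) uvw nz] by simp
  next
    case False
    then show ?thesis
      using lhs a b unfolding triad_embed_def by auto
  qed
qed (auto simp: ray_proj_def triad_compl_proj_def diag_proj_def)

lemma ray_projs_idem_partition4:
  assumes k: "2 \<le> k" "k < n"
    and orth: "dot3 u v = 0" "dot3 u w = 0" "dot3 v w = 0" and uvw: "resolves_identity u v w"
    and nz: "sqnorm3 u \<noteq> 0" "sqnorm3 v \<noteq> 0" "sqnorm3 w \<noteq> 0"
  shows "idem_partition4 (cmat_ring n) (ray_proj n k u) (ray_proj n k v) (ray_proj n k w) (triad_compl_proj n k)"
proof -
  have "triad_compl_proj n k * triad_compl_proj n k = triad_compl_proj n k"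
    unfolding triad_compl_proj_def diag_proj_mult by simp
  then have "{ray_proj n k u, ray_proj n k v, ray_proj n k w, triad_compl_proj n k} \<subseteq> idempotents (cmat_ring n)"
    unfolding idempotents_def ring_mat_simps
    using ray_proj_idem[OF k] nz ray_proj_carrier triad_compl_proj_carrier by simp
  moreover have "dot3 v u = 0" "dot3 w u = 0" "dot3 w v = 0"
    using orth dot3_commute by metis+
  ultimately show ?thesis
    unfolding idem_partition4_def orthogonal_def ring_mat_simps
    using ray_proj_mult_orthogonal[OF k] orth ray_proj_triad_compl_proj[OF k] ray_projs_sum[OF k uvw nz]
    by simp
qed

text \<open>The triples refer to positions in \<open>ks_vectors\<close>.\<close>

definition ks_vectors :: "(int \<times> int \<times> int) list" where "ks_vectors = [(0,0,1), (0,1,(-2)), (0,1,(-1)), (0,1,0), (0,1,1), (0,1,2), (0,2,(-1)), (0,2,1), (1,(-5),(-2)), (1,(-5),2), (1,(-4),1), (1,(-2),(-5)), (1,(-2),(-1)), (1,(-2),0), (1,(-2),1), (1,(-2),5), (1,(-1),(-2)), (1,(-1),(-1)), (1,(-1),0), (1,(-1),1), (1,(-1),2), (1,(-1),4), (1,0,(-2)), (1,0,(-1)), (1,0,0), (1,0,1), (1,0,2), (1,1,(-2)), (1,1,(-1)), (1,1,0), (1,1,1), (1,1,2), (1,2,(-2)), (1,2,(-1)), (1,2,1), (1,5,(-2)), (2,(-5),(-1)), (2,(-5),1), (2,(-2),(-1)), (2,(-1),(-1)), (2,0,(-1)), (2,0,1), (2,1,(-5)), (2,1,(-1)), (2,1,0),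 (2,1,1), (2,1,2), (2,1,5), (4,(-1),1), (5,(-2),(-4)), (5,(-2),1), (5,(-1),(-2)), (5,(-1),2), (5,1,(-2)), (5,1,2), (5,2,(-1)), (5,2,1), (5,4,2)]"

definition ks_triples :: "(nat \<times> nat \<times> nat) list" where "ks_triples = [(0,3,24), (0,13,44), (0,18,29), (1,7,24), (1,12,56), (1,38,57), (2,4,24), (2,17,45), (2,30,39), (3,22,41), (3,23,25), (3,26,40), (4,19,43), (4,32,48), (5,6,24), (5,14,55), (5,33,50), (6,16,54), (6,31,51), (6,46,49), (7,20,53), (7,27,52), (8,27,41), (9,31,40), (10,23,46), (11,14,44), (12,15,44), (12,25,28), (13,42,45), (13,43,47), (14,23,30), (16,19,29), (16,35,41), (17,20,29), (17,25,33), (18,27,30), (18,28,31), (19,23,34), (21,29,38), (22,37,45), (26,36,43), (32,38,46)]"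

lemma ks_vectors_nonzero: "\<forall>u \<in> set ks_vectors. sqnorm3 u \<noteq> 0"
  by (simp add: ks_vectors_def sqnorm3_def coord_def)

lemma ks_triples_orthogonal:
  "\<forall>(a, b, c) \<in> set ks_triples. a < length ks_vectors \<and> b < length ks_vectors \<and> c < length ks_vectors
     \<and> dot3 (ks_vectors ! a) (ks_vectors ! b) = 0 \<and> dot3 (ks_vectors ! a) (ks_vectors ! c) = 0
     \<and> dot3 (ks_vectors ! b) (ks_vectors ! c) = 0
     \<and> resolves_identity (ks_vectors ! a) (ks_vectors ! b) (ks_vectors ! c)"
  by code_simp

lemma ks_triples_uncolourable: "\<not> ks_colouring ks_triples v"
proof
  assume "ks_colouring ks_triples v"
  then show False
    unfolding ks_colouring_def ks_triples_def by simp sat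
qed

section \<open>Collapse of the spectrum\<close>

context pierce_extension
begin

context
  fixes \<phi> :: "complex mat \<Rightarrow> 'a" and n :: nat
  assumes \<phi>: "\<phi> \<in> Ring.ring_hom (cmat_ring n) R"
begin

lemma \<phi>_mult: "A \<in> carrier_mat n n \<Longrightarrow> B \<in> carrier_mat n n \<Longrightarrow> \<phi> (A * B) = \<phi> A \<otimes> \<phi> B"
  using ring_hom_mult[OF \<phi>, of A B] by (simp add: ring_mat_simps)

lemma \<phi>_zero: "\<phi> (0\<^sub>m n n) = \<zero>"
  using ring_hom_zero[OF \<phi> ring_mat ring_axioms] by (simp add: ring_mat_simps)

lemma \<phi>_diag_proj_idempotent: "\<phi> (diag_proj n p) \<in> idempotents R"
  using ring_hom_idempotents[OF \<phi>] diag_proj_carrier diag_proj_mult[of n p p]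
  unfolding idempotents_def ring_mat_simps by simp

lemma idem_open_one_minus_triad_compl_proj:
  assumes k: "2 \<le> k" "k < n"
  shows "idem_open (\<one> \<ominus> \<phi> (triad_compl_proj n k)) = fbot (Fo R)"
proof (rule idem_open_one_minus_bot_if_uncolourable)
  show "\<phi> (ray_proj n k (ks_vectors ! r)) \<in> idempotents R" if "r < length ks_vectors" for r
    using that ks_vectors_nonzero ring_hom_idempotents[OF \<phi>] ray_proj_idem[OF k] ray_proj_carrier
    unfolding idempotents_def ring_mat_simps by simp
  show "\<phi> (triad_compl_proj n k) \<in> idempotents R"
    unfolding triad_compl_proj_def by (rule \<phi>_diag_proj_idempotent)
  show "a < length ks_vectors \<and> b < length ks_vectors \<and> c < length ks_vectors
    \<and> idem_partition4 R (\<phi> (ray_proj n k (ks_vectors ! a))) (\<phi> (ray_proj n k (ks_vectors ! b)))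
        (\<phi> (ray_proj n k (ks_vectors ! c))) (\<phi> (triad_compl_proj n k))"
    if "(a, b, c) \<in> set ks_triples" for a b c
  proof -
    have abc: "a < length ks_vectors" "b < length ks_vectors" "c < length ks_vectors"
      and orth: "dot3 (ks_vectors ! a) (ks_vectors ! b) = 0" "dot3 (ks_vectors ! a) (ks_vectors ! c) = 0"
        "dot3 (ks_vectors ! b) (ks_vectors ! c) = 0"
      and uvw: "resolves_identity (ks_vectors ! a) (ks_vectors ! b) (ks_vectors ! c)"
      using ks_triples_orthogonal that by auto
    have "sqnorm3 (ks_vectors ! a) \<noteq> 0" "sqnorm3 (ks_vectors ! b) \<noteq> 0" "sqnorm3 (ks_vectors ! c) \<noteq> 0"
      using ks_vectors_nonzero abc by simp_all
    from ray_projs_idem_partition4[OF k orth uvw this]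
    show ?thesis
      using abc ring_hom_idem_partition4[OF ring_mat ring_axioms \<phi>] by blast
  qed
qed (rule ks_triples_uncolourable)

lemma idem_open_triad_compl_proj:
  assumes "2 \<le> k" "k < n"
  shows "idem_open (\<phi> (triad_compl_proj n k)) = ftop (Fo R)"
proof -
  have q: "\<phi> (triad_compl_proj n k) \<in> idempotents R"
    unfolding triad_compl_proj_def by (rule \<phi>_diag_proj_idempotent)
  have "ftop (Fo R) = fsup (Fo R) {idem_open (\<phi> (triad_compl_proj n k)), fbot (Fo R)}"
    using idem_open_one_minus[OF q] idem_open_one_minus_triad_compl_proj[OF assms] by simp
  also have "\<dots> = idem_open (\<phi> (triad_compl_proj n k))"
    using frame.fsup_fbot[OF frame_R idem_open_closed[OF q]] .
  finally show ?thesis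
    by simp
qed

lemma commuting_set_diag_projs: "commuting_set R (range (\<lambda>p. \<phi> (diag_proj n p)))"
  unfolding commuting_set_def
proof (intro conjI ballI subsetI)
  show "x \<in> carrier R" if "x \<in> range (\<lambda>p. \<phi> (diag_proj n p))" for x
    using that \<phi>_diag_proj_idempotent idempotentsD(1) by blast
  fix x y assume "x \<in> range (\<lambda>p. \<phi> (diag_proj n p))" "y \<in> range (\<lambda>p. \<phi> (diag_proj n p))"
  then obtain p p' where "x = \<phi> (diag_proj n p)" "y = \<phi> (diag_proj n p')"
    by blast
  moreover have "(\<lambda>a. p a \<and> p' a) = (\<lambda>a. p' a \<and> p a)"
    by auto
  ultimately show "x \<otimes> y = y \<otimes> x"
    using \<phi>_mult[OF diag_proj_carrier diag_proj_carrier] diag_proj_mult by metis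
qed

lemma idem_open_diag_proj_ge:
  assumes "3 \<le> k" "k \<le> n"
  shows "idem_open (\<phi> (diag_proj n (\<lambda>a. k \<le> a))) = ftop (Fo R)"
  using assms
proof (induction k rule: dec_induct)
  case base
  have "(\<lambda>a. 3 \<le> a) = (\<lambda>a. a \<notin> triad 2)"
    by (auto simp: triad_def)
  then show ?case
    using idem_open_triad_compl_proj[of 2] base unfolding triad_compl_proj_def by simp
next
  case (step m)
  let ?S = "range (\<lambda>p. \<phi> (diag_proj n p))"
  have diag: "\<phi> (diag_proj n p) \<in> idempotents (bicommutant_ring R ?S)" for p
    using idempotent_bicommutant_ring[OF commuting_set_diag_projs _ \<phi>_diag_proj_idempotent] by blast
  have "(\<lambda>a. Suc m \<le> a) = (\<lambda>a. m \<le> a \<and> a \<notin> triad m)"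
    using step(1) by (auto simp: triad_def)
  then have "\<phi> (diag_proj n (\<lambda>a. Suc m \<le> a)) = \<phi> (diag_proj n (\<lambda>a. m \<le> a)) \<otimes> \<phi> (triad_compl_proj n m)"
    unfolding triad_compl_proj_def using \<phi>_mult[OF diag_proj_carrier diag_proj_carrier] diag_proj_mult
    by simp
  then have "idem_open (\<phi> (diag_proj n (\<lambda>a. Suc m \<le> a)))
      = finf (Fo R) (idem_open (\<phi> (diag_proj n (\<lambda>a. m \<le> a)))) (idem_open (\<phi> (triad_compl_proj n m)))"
    using idem_open_mult[OF commuting_set_diag_projs diag diag] unfolding triad_compl_proj_def by simp
  also have "\<dots> = ftop (Fo R)"
    using step idem_open_triad_compl_proj[of m] frame.finf_ftop[OF frame_R frame.ftop_closed[OF frame_R]]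
    by simp
  finally show ?case .
qed

lemma fbot_eq_ftop_if_matrix_hom:
  assumes "3 \<le> n"
  shows "fbot (Fo R) = ftop (Fo R)"
proof -
  have "diag_proj n (\<lambda>a. n \<le> a) = 0\<^sub>m n n"
    by (auto intro!: eq_matI simp: diag_proj_def)
  then show ?thesis
    using idem_open_diag_proj_ge[OF assms order_refl] \<phi>_zero idem_open_zero by simp
qed

end

end

theorem mainTheorem11:
  fixes Fo :: "'a ring \<Rightarrow> 'b frame_str"
    and Fm :: "'a ring \<Rightarrow> 'a ring \<Rightarrow> ('a \<Rightarrow> 'a) \<Rightarrow> 'b \<Rightarrow> 'b"
  assumes "ring_loc_functor Fo Fm"
    and "restricts_to_pierce Fo Fm"
  shows "(\<forall>R. ring R \<and> kochen_specker R \<longrightarrow> trivial_frame (Fo R))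
       \<and> (\<forall>n\<ge>3. \<forall>R. ring R \<and> (\<exists>\<phi>. \<phi> \<in> ring_iso (cmat_ring n) R) \<longrightarrow> trivial_frame (Fo R))"
proof -
  obtain \<eta> :: "'a ring \<Rightarrow> 'b \<Rightarrow> 'a set" where
    iso: "\<forall>C. cring C \<longrightarrow> frame_iso (Fo C) (pierce_frame C) (\<eta> C)" and
    natural: "\<forall>C D h. cring C \<and> cring D \<and> ring_mor C D h \<longrightarrow>
      (\<forall>x\<in>fcarrier (Fo C). \<eta> D (Fm C D h x) = pierce_map C D h (\<eta> C x))"
    using assms(2) unfolding restricts_to_pierce_def by blast
  have trivial: "trivial_frame (Fo R)"
    if "ring R" "\<phi> \<in> Ring.ring_hom (cmat_ring n) R" "3 \<le> n" for R :: "'a ring" and \<phi> n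
  proof -
    interpret pierce_extension R Fo Fm \<eta>
      using that(1) assms(1) iso natural by (simp add: pierce_extension_def pierce_extension_axioms_def)
    show ?thesis
      unfolding trivial_frame_def using fbot_eq_ftop_if_matrix_hom[OF that(2,3)] .
  qed
  show ?thesis
    using trivial unfolding kochen_specker_def ring_iso_def by blast
qed

end
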